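(* Let $X$ be a Hausdorff topological space and $f\colon X\to\mathbb R^n$ a continuous proper map. Suppose $S\subseteq X$ is a dense subset saturated by $f$ (i.e. a union of level sets of $f$) such that $f(S)$ is convex, the fibres of $f|_S$ are connected, and $f|_S\colon S\to f(S)$ is open. Then the fibres of $f$ are connected. *)

theory Defs
  imports "HOL-Analysis.Analysis"
begin

end

theory Submission
  imports Defs
begin

text \<open>If a fibre \<open>F\<close> of \<open>f\<close> were disconnected, Hausdorffness and compactness of \<open>F\<close> would
  give disjoint open sets \<open>U\<close>, \<open>V\<close> splitting it, and since \<open>f\<close> is closed all fibres over a
  small ball \<open>B\<close> around the value of \<open>F\<close> lie in \<open>U \<union> V\<close>. By density, \<open>U\<close> and \<open>V\<close> both meet
  \<open>S\<close> over \<open>B\<close>; the images of these pieces are open in \<open>f(S)\<close> (openness of \<open>f|\<^sub>S\<close>) and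
  cover the convex, hence connected, set \<open>B \<inter> f(S)\<close>, so they overlap. A fibre of \<open>f|\<^sub>S\<close> over
  a common point then meets both \<open>U\<close> and \<open>V\<close>, contradicting its connectedness.\<close>

lemma compactin_not_connectedin_separation:
  assumes "Hausdorff_space X" "compactin X F" "\<not> connectedin X F"
  obtains U V where "openin X U" "openin X V" "disjnt U V" "F \<subseteq> U \<union> V"
    "U \<inter> F \<noteq> {}" "V \<inter> F \<noteq> {}"
proof -
  have "F \<subseteq> topspace X"
    using assms(2) compactin_subset_topspace by blast
  then obtain E1 E2 where E: "openin X E1" "openin X E2" "F \<subseteq> E1 \<union> E2"
      "E1 \<inter> E2 \<inter> F = {}" "E1 \<inter> F \<noteq> {}" "E2 \<inter> F \<noteq> {}"
    using assms(3) unfolding connectedin by blast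
  have F_closed: "closedin X F"
    using compactin_imp_closedin assms(1,2) by blast
  have "compactin X (F - E2)" "compactin X (F - E1)"
    using closed_compactin[OF assms(2)] closedin_diff[OF F_closed] E(1,2) by auto
  moreover have "disjnt (F - E2) (F - E1)"
    using E(3) by (auto simp: disjnt_def)
  ultimately obtain U V where UV: "openin X U" "openin X V" "disjnt U V"
      "F - E2 \<subseteq> U" "F - E1 \<subseteq> V"
    using assms(1) unfolding Hausdorff_space_compact_sets by metis
  show thesis
  proof
    show "F \<subseteq> U \<union> V" "U \<inter> F \<noteq> {}" "V \<inter> F \<noteq> {}"
      using UV(4,5) E(4,5,6) by blast+
  qed (use UV in auto)
qed

lemma closed_map_fibre_ball:
  fixes f :: "'a \<Rightarrow> 'b::metric_space"
  assumes "closed_map X euclidean f" "openin X U" "{x \<in> topspace X. f x = y} \<subseteq> U"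
  obtains e where "e > 0" "{x \<in> topspace X. f x \<in> ball y e} \<subseteq> U"
proof -
  obtain W where "open W" "y \<in> W" "{x \<in> topspace X. f x \<in> W} \<subseteq> U"
    using assms unfolding closed_map_fibre_neighbourhood by force
  moreover obtain e where "e > 0" "ball y e \<subseteq> W"
    using \<open>open W\<close> \<open>y \<in> W\<close> open_contains_ball by blast
  ultimately show thesis
    using that by blast
qed

lemma open_map_dense_images_meet:
  assumes "X closure_of S = topspace X"
    and "open_map (subtopology X S) (top_of_set (f ` S)) f"
    and "openin X P" "openin X Q" "P \<noteq> {}" "Q \<noteq> {}"
    and "connected (f ` (S \<inter> (P \<union> Q)))"
  shows "f ` (S \<inter> P) \<inter> f ` (S \<inter> Q) \<noteq> {}"
proof -
  define K where "K = f ` (S \<inter> (P \<union> Q))"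
  have open_in_K: "openin (top_of_set K) (f ` (S \<inter> T))"
    if "openin X T" "T \<subseteq> P \<union> Q" for T
  proof (rule openin_subset_trans)
    show "openin (top_of_set (f ` S)) (f ` (S \<inter> T))"
      using assms(2) openin_subtopology_Int2[OF \<open>openin X T\<close>] unfolding open_map_def by blast
  qed (use that in \<open>auto simp: K_def\<close>)
  have "f ` (S \<inter> P) \<noteq> {}" "f ` (S \<inter> Q) \<noteq> {}"
    using assms(1,3-6) unfolding dense_intersects_open by blast+
  moreover have "K \<subseteq> f ` (S \<inter> P) \<union> f ` (S \<inter> Q)"
    by (auto simp: K_def)
  ultimately show ?thesis
    using assms(7) open_in_K[OF assms(3)] open_in_K[OF assms(4)]
    unfolding connected_openin K_def by blast
qed

lemma open_map_connected_fibres_connectedD: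
  assumes "X closure_of S = topspace X" "S \<subseteq> topspace X"
    and "open_map (subtopology X S) (top_of_set (f ` S)) f"
    and "\<And>y. connectedin X {x \<in> S. f x = y}"
    and "openin X U" "openin X V" "disjnt U V"
    and "openin X {x \<in> topspace X. f x \<in> W}" "{x \<in> topspace X. f x \<in> W} \<subseteq> U \<union> V"
    and "connected (W \<inter> f ` S)"
  shows "U \<inter> {x \<in> topspace X. f x \<in> W} = {} \<or> V \<inter> {x \<in> topspace X. f x \<in> W} = {}"
proof (rule ccontr)
  define N where "N = {x \<in> topspace X. f x \<in> W}"
  assume "\<not> (U \<inter> {x \<in> topspace X. f x \<in> W} = {} \<or> V \<inter> {x \<in> topspace X. f x \<in> W} = {})"
  then have "U \<inter> N \<noteq> {}" "V \<inter> N \<noteq> {}"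
    by (auto simp: N_def)
  have "S \<inter> (U \<inter> N \<union> V \<inter> N) = S \<inter> N"
    using assms(9) by (auto simp: N_def)
  then have "f ` (S \<inter> (U \<inter> N \<union> V \<inter> N)) = W \<inter> f ` S"
    using assms(2) by (auto simp: N_def)
  then have "f ` (S \<inter> (U \<inter> N)) \<inter> f ` (S \<inter> (V \<inter> N)) \<noteq> {}"
    using open_map_dense_images_meet[OF assms(1,3) openin_Int[OF assms(5,8)]
        openin_Int[OF assms(6,8)]] assms(10) \<open>U \<inter> N \<noteq> {}\<close> \<open>V \<inter> N \<noteq> {}\<close>
    unfolding N_def by simp
  then obtain u v where u: "u \<in> S" "u \<in> U" "u \<in> N" and v: "v \<in> S" "v \<in> V"
      and "f u = f v"
    by auto
  define G where "G = {x \<in> S. f x = f u}"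
  have "G \<subseteq> U \<union> V"
    using assms(2,9) u(3) by (auto simp: G_def N_def)
  moreover have "U \<inter> V \<inter> G = {}"
    using assms(7) by (auto simp: disjnt_def)
  moreover have "U \<inter> G \<noteq> {}" "V \<inter> G \<noteq> {}"
    using u v \<open>f u = f v\<close> by (auto simp: G_def)
  ultimately show False
    using connectedinD[OF assms(4)[of "f u"] assms(5,6)] unfolding G_def by simp
qed

theorem lemma15:
  fixes X :: "'a topology" and f :: "'a \<Rightarrow> real^'n" and S :: "'a set"
  assumes "Hausdorff_space X"
    and "continuous_map X euclidean f"
    and "proper_map X euclidean f"
    and "S \<subseteq> topspace X"
    and "X closure_of S = topspace X"
    and "{x \<in> topspace X. f x \<in> f ` S} = S"
    and "convex (f ` S)"
    and "\<And>y. connectedin X {x \<in> S. f x = y}"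
    and "open_map (subtopology X S) (subtopology euclidean (f ` S)) f"
  shows "\<forall>y. connectedin X {x \<in> topspace X. f x = y}"
proof
  fix y
  define F where "F = {x \<in> topspace X. f x = y}"
  have F_compact: "compactin X F"
    using assms(3) unfolding proper_map_def F_def by simp
  have "connectedin X F"
  proof (rule ccontr)
    assume "\<not> connectedin X F"
    then obtain U V where UV: "openin X U" "openin X V" "disjnt U V" "F \<subseteq> U \<union> V"
        "U \<inter> F \<noteq> {}" "V \<inter> F \<noteq> {}"
      using compactin_not_connectedin_separation[OF assms(1) F_compact] by blast
    obtain e where "e > 0" and tube: "{x \<in> topspace X. f x \<in> ball y e} \<subseteq> U \<union> V"
      using closed_map_fibre_ball[OF proper_imp_closed_map[OF assms(3)] openin_Un[OF UV(1,2)]]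
        UV(4) unfolding F_def by blast
    have "openin X {x \<in> topspace X. f x \<in> ball y e}"
      by (rule openin_continuous_map_preimage[OF assms(2)]) simp
    moreover have "connected (ball y e \<inter> f ` S)"
      by (simp add: convex_connected convex_Int assms(7))
    moreover have "F \<subseteq> {x \<in> topspace X. f x \<in> ball y e}"
      using \<open>e > 0\<close> by (auto simp: F_def)
    ultimately show False
      using open_map_connected_fibres_connectedD[OF assms(5,4,9,8) UV(1-3) _ tube] UV(5,6)
      by blast
  qed
  then show "connectedin X {x \<in> topspace X. f x = y}"
    by (simp add: F_def)
qed

end
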